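(* Let $n\ge2$, $\kappa\ge1$, and identify $\mathcal G_{[n;\kappa]}$ with $\mathbb R^{n\kappa^n}$ (standard inner product). Then the subspaces $\mathcal S_{[n;\kappa]}$ and $\mathcal K_{[n;\kappa]}$ are orthogonal, and: (1) if $n>\kappa+1$, then $\mathcal G_{[n;\kappa]}=\mathcal S_{[n;\kappa]}\oplus\mathcal E_{[n;\kappa]}$; (2) if $n\le\kappa+1$, then $\mathcal G_{[n;\kappa]}=\mathcal S_{[n;\kappa]}\oplus\mathcal K_{[n;\kappa]}\oplus\mathcal E_{[n;\kappa]}$, where $\oplus$ denotes a direct sum of mutually orthogonal subspaces.
   Context: A finite game $G\in\mathcal G_{[n;\kappa]}$ has players $\{1,\dots,n\}$, each with strategy set $\{1,\dots,\kappa\}$ (strategy $j$ identified with $\delta_\kappa^j$, the $j$-th column of $I_\kappa$), and payoffs $c_i$; $V_i^c\in\mathbb R^{\kappa^n}$ is the row vector with $c_i(x_1,\dots,x_n)=V_i^c(x_1\otimes\cdots\otimes x_n)$, and the structure vector $V_G=[V_1^c,\dots,V_n^c]$ identifies $\mathcal G_{[n;\kappa]}$ with $\mathbb R^{n\kappa^n}$. $G$ is symmetric if for all $\sigma\in\mathbf S_n$, all $i$ and all profiles, $c_i(x_1,\dots,x_n)=c_{\sigma(i)}(x_{\sigma^{-1}(1)},\dots,x_{\sigma^{-1}(n)})$, and skew-symmetric if $c_i(x_1,\dots,x_n)=\mathrm{sgn}(\sigma)c_{\sigma(i)}(x_{\sigma^{-1}(1)},\dots,x_{\sigma^{-1}(n)})$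 for all such $\sigma,i$ and profiles. $\mathcal S_{[n;\kappa]}$, $\mathcal K_{[n;\kappa]}$ are the subspaces of symmetric and skew-symmetric games, and $\mathcal E_{[n;\kappa]}$ (asymmetric games) is the orthogonal complement of $\mathcal S_{[n;\kappa]}\cup\mathcal K_{[n;\kappa]}$ in $\mathbb R^{n\kappa^n}$. *)

theory Defs
  imports Complex_Main "HOL-Combinatorics.Permutations"
begin

text \<open>A strategy profile is a function
  x :: nat => nat with x i in {1..kappa} for i in {1..n} and x i = 0 elsewhere
  (a canonical extension so that profiles are determined by their values on players).\<close>

definition profiles :: "nat \<Rightarrow> nat \<Rightarrow> (nat \<Rightarrow> nat) set" where
  "profiles n \<kappa> = {x. (\<forall>i\<in>{1..n}. x i \<in> {1..\<kappa>}) \<and> (\<forall>i. i \<notin> {1..n} \<longrightarrow> x i = 0)}"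

text \<open>A game in G[n;kappa]: payoff c i x of player i at profile x; values outside the
  players/profiles are fixed to 0, so games correspond bijectively to R^(n kappa^n).\<close>

definition games :: "nat \<Rightarrow> nat \<Rightarrow> (nat \<Rightarrow> (nat \<Rightarrow> nat) \<Rightarrow> real) set" where
  "games n \<kappa> = {c. \<forall>i x. (i \<notin> {1..n} \<or> x \<notin> profiles n \<kappa>) \<longrightarrow> c i x = 0}"

definition game_inner :: "nat \<Rightarrow> nat \<Rightarrow> (nat \<Rightarrow> (nat \<Rightarrow> nat) \<Rightarrow> real)
    \<Rightarrow> (nat \<Rightarrow> (nat \<Rightarrow> nat) \<Rightarrow> real) \<Rightarrow> real" where
  "game_inner n \<kappa> c d = (\<Sum>i\<in>{1..n}. \<Sum>x\<in>profiles n \<kappa>. c i x * d i x)"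

definition symmetric_games :: "nat \<Rightarrow> nat \<Rightarrow> (nat \<Rightarrow> (nat \<Rightarrow> nat) \<Rightarrow> real) set" where
  "symmetric_games n \<kappa> = {c \<in> games n \<kappa>. \<forall>\<sigma>. \<sigma> permutes {1..n} \<longrightarrow>
     (\<forall>i\<in>{1..n}. \<forall>x\<in>profiles n \<kappa>. c i x = c (\<sigma> i) (x \<circ> inv \<sigma>))}"

definition skew_symmetric_games :: "nat \<Rightarrow> nat \<Rightarrow> (nat \<Rightarrow> (nat \<Rightarrow> nat) \<Rightarrow> real) set" where
  "skew_symmetric_games n \<kappa> = {c \<in> games n \<kappa>. \<forall>\<sigma>. \<sigma> permutes {1..n} \<longrightarrow>
     (\<forall>i\<in>{1..n}. \<forall>x\<in>profiles n \<kappa>. c i x = of_int (sign \<sigma>) * c (\<sigma> i) (x \<circ> inv \<sigma>))}"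

definition asymmetric_games :: "nat \<Rightarrow> nat \<Rightarrow> (nat \<Rightarrow> (nat \<Rightarrow> nat) \<Rightarrow> real) set" where
  "asymmetric_games n \<kappa> = {c \<in> games n \<kappa>.
     \<forall>d \<in> symmetric_games n \<kappa> \<union> skew_symmetric_games n \<kappa>. game_inner n \<kappa> c d = 0}"

definition game_orth :: "nat \<Rightarrow> nat \<Rightarrow> (nat \<Rightarrow> (nat \<Rightarrow> nat) \<Rightarrow> real) set
    \<Rightarrow> (nat \<Rightarrow> (nat \<Rightarrow> nat) \<Rightarrow> real) set \<Rightarrow> bool" where
  "game_orth n \<kappa> A B \<longleftrightarrow> (\<forall>a\<in>A. \<forall>b\<in>B. game_inner n \<kappa> a b = 0)"

text \<open>Orthogonal direct sums (orthogonality makes the sums direct).\<close>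

definition orth_dsum2 where
  "orth_dsum2 n \<kappa> A B \<longleftrightarrow>
     games n \<kappa> = {(\<lambda>i x. a i x + b i x) | a b. a \<in> A \<and> b \<in> B} \<and> game_orth n \<kappa> A B"

definition orth_dsum3 where
  "orth_dsum3 n \<kappa> A B C \<longleftrightarrow>
     games n \<kappa> = {(\<lambda>i x. a i x + b i x + c i x) | a b c. a \<in> A \<and> b \<in> B \<and> c \<in> C} \<and>
     game_orth n \<kappa> A B \<and> game_orth n \<kappa> A C \<and> game_orth n \<kappa> B C"

end

theory Submission
  imports Defs
begin

text \<open>The symmetric group acts on games by relabelling players, and the inner product is
  invariant under this action. Averaging a game over the action, plainly or weighted by the
  sign, gives a symmetric and a skew-symmetric game; these averages are the orthogonal
  projections onto \<open>S\<close> and \<open>K\<close>, so what remains is orthogonal to both, i.e. asymmetric.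
  \<open>S\<close> and \<open>K\<close> are orthogonal because the transposition of players 1 and 2 fixes the one and
  negates the other. If \<open>n > \<kappa> + 1\<close>, then for every player \<open>i\<close> and profile \<open>x\<close> two of the
  other \<open>n - 1\<close> players choose the same strategy (pigeonhole); swapping them fixes \<open>i\<close> and
  \<open>x\<close> but has sign \<open>-1\<close>, so every skew-symmetric game vanishes.\<close>

definition permute_game ::
    "(nat \<Rightarrow> nat) \<Rightarrow> (nat \<Rightarrow> (nat \<Rightarrow> nat) \<Rightarrow> real) \<Rightarrow> (nat \<Rightarrow> (nat \<Rightarrow> nat) \<Rightarrow> real)" where
  "permute_game \<sigma> c = (\<lambda>i x. c (\<sigma> i) (x \<circ> inv \<sigma>))"

lemma permute_game_comp:
  assumes "\<sigma> permutes {1..n}" "\<rho> permutes {1..n}"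
  shows "permute_game \<rho> (permute_game \<sigma> c) = permute_game (\<sigma> \<circ> \<rho>) c"
  unfolding permute_game_def
  using o_inv_distrib[OF permutes_bij[OF assms(1)] permutes_bij[OF assms(2)]]
  by (simp add: o_assoc)

lemma profile_comp_permutes:
  assumes "\<sigma> permutes {1..n}" "x \<in> profiles n \<kappa>"
  shows "x \<circ> \<sigma> \<in> profiles n \<kappa>"
  using assms permutes_in_image[OF assms(1)] permutes_not_in[OF assms(1)]
  unfolding profiles_def by auto

lemma profile_comp_inv_iff:
  assumes "\<sigma> permutes {1..n}"
  shows "x \<circ> inv \<sigma> \<in> profiles n \<kappa> \<longleftrightarrow> x \<in> profiles n \<kappa>"
  using profile_comp_permutes[OF assms, of "x \<circ> inv \<sigma>"]
    profile_comp_permutes[OF permutes_inv[OF assms], of x]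
  by (auto simp: comp_assoc permutes_inv_o[OF assms])

lemma bij_betw_profiles_comp_inv:
  assumes "\<sigma> permutes {1..n}"
  shows "bij_betw (\<lambda>x. x \<circ> inv \<sigma>) (profiles n \<kappa>) (profiles n \<kappa>)"
  by (rule bij_betw_byWitness[where f'="\<lambda>x. x \<circ> \<sigma>"])
    (use assms profile_comp_inv_iff[OF assms] profile_comp_permutes[OF assms] in
      \<open>auto simp: comp_assoc permutes_inv_o[OF assms]\<close>)

lemma permute_game_eq_0:
  assumes "c \<in> games n \<kappa>" "\<sigma> permutes {1..n}" "i \<notin> {1..n} \<or> x \<notin> profiles n \<kappa>"
  shows "permute_game \<sigma> c i x = 0"
proof -
  have "\<sigma> i \<notin> {1..n} \<or> x \<circ> inv \<sigma> \<notin> profiles n \<kappa>"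
    using assms(3) permutes_in_image[OF assms(2)] profile_comp_inv_iff[OF assms(2)] by auto
  then show ?thesis using assms(1) unfolding games_def permute_game_def by auto
qed

lemma symmetric_games_subset: "symmetric_games n \<kappa> \<subseteq> games n \<kappa>"
  unfolding symmetric_games_def by blast

lemma skew_symmetric_games_subset: "skew_symmetric_games n \<kappa> \<subseteq> games n \<kappa>"
  unfolding skew_symmetric_games_def by blast

lemma asymmetric_games_subset: "asymmetric_games n \<kappa> \<subseteq> games n \<kappa>"
  unfolding asymmetric_games_def by blast

lemma games_add: "a \<in> games n \<kappa> \<Longrightarrow> b \<in> games n \<kappa> \<Longrightarrow> (\<lambda>i x. a i x + b i x) \<in> games n \<kappa>"
  unfolding games_def by simp

lemma symmetric_game_permute:
  assumes "c \<in> symmetric_games n \<kappa>" "\<sigma> permutes {1..n}" "i \<in> {1..n}" "x \<in> profiles n \<kappa>"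
  shows "permute_game \<sigma> c i x = c i x"
  using assms unfolding symmetric_games_def permute_game_def by auto

lemma skew_symmetric_game_permute:
  assumes "c \<in> skew_symmetric_games n \<kappa>" "\<sigma> permutes {1..n}" "i \<in> {1..n}" "x \<in> profiles n \<kappa>"
  shows "c i x = of_int (sign \<sigma>) * permute_game \<sigma> c i x"
  using assms unfolding skew_symmetric_games_def permute_game_def by auto

lemma game_inner_cong:
  assumes "\<And>i x. i \<in> {1..n} \<Longrightarrow> x \<in> profiles n \<kappa> \<Longrightarrow> c i x = c' i x"
    and "\<And>i x. i \<in> {1..n} \<Longrightarrow> x \<in> profiles n \<kappa> \<Longrightarrow> d i x = d' i x"
  shows "game_inner n \<kappa> c d = game_inner n \<kappa> c' d'"
  unfolding game_inner_def using assms by (intro sum.cong refl) auto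

lemma game_inner_commute: "game_inner n \<kappa> c d = game_inner n \<kappa> d c"
  unfolding game_inner_def by (simp add: mult.commute)

lemma game_inner_sum_left:
  "game_inner n \<kappa> (\<lambda>i x. \<Sum>a\<in>A. f a i x) d = (\<Sum>a\<in>A. game_inner n \<kappa> (f a) d)"
  unfolding game_inner_def sum_distrib_right by (simp add: sum.swap[of _ A])

lemma game_inner_scale_left:
  "game_inner n \<kappa> (\<lambda>i x. r * c i x) d = r * game_inner n \<kappa> c d"
  unfolding game_inner_def by (simp add: sum_distrib_left mult.assoc)

lemma game_inner_scale_right:
  "game_inner n \<kappa> c (\<lambda>i x. r * d i x) = r * game_inner n \<kappa> c d"
  using game_inner_scale_left[of n \<kappa> r d c] game_inner_commute by metis

lemma game_inner_diff_left:
  "game_inner n \<kappa> (\<lambda>i x. c i x - a i x - b i x) d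
     = game_inner n \<kappa> c d - game_inner n \<kappa> a d - game_inner n \<kappa> b d"
  unfolding game_inner_def by (simp add: left_diff_distrib sum_subtractf)

lemma game_inner_permute_game:
  assumes "\<sigma> permutes {1..n}"
  shows "game_inner n \<kappa> (permute_game \<sigma> c) (permute_game \<sigma> d) = game_inner n \<kappa> c d"
proof -
  have "game_inner n \<kappa> (permute_game \<sigma> c) (permute_game \<sigma> d) =
      (\<Sum>i\<in>{1..n}. \<Sum>y\<in>profiles n \<kappa>. c (\<sigma> i) y * d (\<sigma> i) y)"
    unfolding game_inner_def permute_game_def
    by (intro sum.cong refl sum.reindex_bij_betw[OF bij_betw_profiles_comp_inv[OF assms]])
  also have "\<dots> = game_inner n \<kappa> c d"
    unfolding game_inner_def
    by (rule sum.reindex_bij_betw[OF permutes_imp_bij[OF assms]])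
  finally show ?thesis .
qed

lemma game_inner_symmetric_skew_symmetric:
  assumes "n \<ge> 2" "a \<in> symmetric_games n \<kappa>" "b \<in> skew_symmetric_games n \<kappa>"
  shows "game_inner n \<kappa> a b = 0"
proof -
  define \<tau> where "\<tau> = Transposition.transpose (1::nat) 2"
  have \<tau>: "\<tau> permutes {1..n}" unfolding \<tau>_def using assms(1) by (intro permutes_swap_id) auto
  have "sign \<tau> = -1" unfolding \<tau>_def by (simp add: sign_swap_id)
  have "game_inner n \<kappa> a b = game_inner n \<kappa> (permute_game \<tau> a) (permute_game \<tau> b)"
    by (rule game_inner_permute_game[OF \<tau>, symmetric])
  also have "\<dots> = game_inner n \<kappa> a (\<lambda>i x. -1 * b i x)"
    using \<open>sign \<tau> = -1\<close> skew_symmetric_game_permute[OF assms(3) \<tau>]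
    by (intro game_inner_cong) (auto simp: symmetric_game_permute[OF assms(2) \<tau>])
  also have "\<dots> = - game_inner n \<kappa> a b"
    using game_inner_scale_right[of n \<kappa> a "-1" b] by simp
  finally show ?thesis by simp
qed

lemma game_orth_asymmetric_games:
  assumes "A \<subseteq> symmetric_games n \<kappa> \<union> skew_symmetric_games n \<kappa>"
  shows "game_orth n \<kappa> A (asymmetric_games n \<kappa>)"
  unfolding game_orth_def
proof (intro ballI)
  fix a e assume "a \<in> A" "e \<in> asymmetric_games n \<kappa>"
  then have "game_inner n \<kappa> e a = 0" using assms unfolding asymmetric_games_def by blast
  then show "game_inner n \<kappa> a e = 0" by (simp add: game_inner_commute)
qed

definition symmetrize :: "nat \<Rightarrow> (nat \<Rightarrow> (nat \<Rightarrow> nat) \<Rightarrow> real) \<Rightarrow> (nat \<Rightarrow> (nat \<Rightarrow> nat) \<Rightarrow> real)" where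
  "symmetrize n c = (\<lambda>i x. (1 / fact n) * (\<Sum>\<sigma>\<in>{\<sigma>. \<sigma> permutes {1..n}}. permute_game \<sigma> c i x))"

definition skew_symmetrize ::
    "nat \<Rightarrow> (nat \<Rightarrow> (nat \<Rightarrow> nat) \<Rightarrow> real) \<Rightarrow> (nat \<Rightarrow> (nat \<Rightarrow> nat) \<Rightarrow> real)" where
  "skew_symmetrize n c = (\<lambda>i x. (1 / fact n) *
     (\<Sum>\<sigma>\<in>{\<sigma>. \<sigma> permutes {1..n}}. of_int (sign \<sigma>) * permute_game \<sigma> c i x))"

lemma card_permutes_atLeastAtMost: "card {\<sigma>. \<sigma> permutes {1..n}} = fact n"
  by (rule card_permutations) auto

lemma symmetrize_symmetric:
  assumes "c \<in> games n \<kappa>"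
  shows "symmetrize n c \<in> symmetric_games n \<kappa>"
  unfolding symmetric_games_def
proof (intro CollectI conjI allI impI ballI)
  show "symmetrize n c \<in> games n \<kappa>"
    unfolding games_def symmetrize_def using permute_game_eq_0[OF assms] by simp
next
  fix \<rho> i x assume \<rho>: "\<rho> permutes {1..n}"
  have "(\<Sum>\<sigma>\<in>{\<sigma>. \<sigma> permutes {1..n}}. permute_game \<sigma> c (\<rho> i) (x \<circ> inv \<rho>))
      = (\<Sum>\<sigma>\<in>{\<sigma>. \<sigma> permutes {1..n}}. permute_game (\<sigma> \<circ> \<rho>) c i x)"
    using permute_game_comp[OF _ \<rho>] unfolding permute_game_def[of \<rho>]
    by (intro sum.cong) (auto simp: fun_eq_iff)
  also have "\<dots> = (\<Sum>\<sigma>\<in>{\<sigma>. \<sigma> permutes {1..n}}. permute_game \<sigma> c i x)"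
    using sum_permutations_compose_right[OF \<rho>, of "\<lambda>\<sigma>. permute_game \<sigma> c i x"] by simp
  finally show "symmetrize n c i x = symmetrize n c (\<rho> i) (x \<circ> inv \<rho>)"
    unfolding symmetrize_def by simp
qed

lemma skew_symmetrize_skew_symmetric:
  assumes "c \<in> games n \<kappa>"
  shows "skew_symmetrize n c \<in> skew_symmetric_games n \<kappa>"
  unfolding skew_symmetric_games_def
proof (intro CollectI conjI allI impI ballI)
  show "skew_symmetrize n c \<in> games n \<kappa>"
    unfolding games_def skew_symmetrize_def using permute_game_eq_0[OF assms] by simp
next
  fix \<rho> i x assume \<rho>: "\<rho> permutes {1..n}"
  have sign_comp: "sign (\<sigma> \<circ> \<rho>) = sign \<sigma> * sign \<rho>" if "\<sigma> permutes {1..n}" for \<sigma>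
    using sign_compose[OF permutes_imp_permutation[OF finite_atLeastAtMost that]
        permutes_imp_permutation[OF finite_atLeastAtMost \<rho>]] by simp
  have "of_int (sign \<rho>) * (\<Sum>\<sigma>\<in>{\<sigma>. \<sigma> permutes {1..n}}.
          of_int (sign \<sigma>) * permute_game \<sigma> c (\<rho> i) (x \<circ> inv \<rho>))
      = (\<Sum>\<sigma>\<in>{\<sigma>. \<sigma> permutes {1..n}}. of_int (sign (\<sigma> \<circ> \<rho>)) * permute_game (\<sigma> \<circ> \<rho>) c i x)"
    unfolding sum_distrib_left using permute_game_comp[OF _ \<rho>] sign_comp
    unfolding permute_game_def[of \<rho>]
    by (intro sum.cong) (auto simp: fun_eq_iff)
  also have "\<dots> = (\<Sum>\<sigma>\<in>{\<sigma>. \<sigma> permutes {1..n}}. of_int (sign \<sigma>) * permute_game \<sigma> c i x)"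
    using sum_permutations_compose_right[OF \<rho>, of "\<lambda>\<sigma>. of_int (sign \<sigma>) * permute_game \<sigma> c i x"]
    by simp
  finally show "skew_symmetrize n c i x = of_int (sign \<rho>) * skew_symmetrize n c (\<rho> i) (x \<circ> inv \<rho>)"
    unfolding skew_symmetrize_def by (simp add: algebra_simps)
qed

lemma game_inner_symmetrize:
  assumes "d \<in> symmetric_games n \<kappa>"
  shows "game_inner n \<kappa> (symmetrize n c) d = game_inner n \<kappa> c d"
proof -
  have "game_inner n \<kappa> (permute_game \<sigma> c) d = game_inner n \<kappa> c d" if \<sigma>: "\<sigma> permutes {1..n}" for \<sigma>
  proof -
    have "game_inner n \<kappa> (permute_game \<sigma> c) d = game_inner n \<kappa> (permute_game \<sigma> c) (permute_game \<sigma> d)"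
      by (rule game_inner_cong) (auto simp: symmetric_game_permute[OF assms \<sigma>])
    then show ?thesis using game_inner_permute_game[OF \<sigma>] by simp
  qed
  then show ?thesis
    unfolding symmetrize_def game_inner_scale_left game_inner_sum_left
    using card_permutes_atLeastAtMost[of n] by simp
qed

lemma game_inner_skew_symmetrize:
  assumes "d \<in> skew_symmetric_games n \<kappa>"
  shows "game_inner n \<kappa> (skew_symmetrize n c) d = game_inner n \<kappa> c d"
proof -
  have "of_int (sign \<sigma>) * game_inner n \<kappa> (permute_game \<sigma> c) d = game_inner n \<kappa> c d"
    if \<sigma>: "\<sigma> permutes {1..n}" for \<sigma>
  proof -
    have "game_inner n \<kappa> (permute_game \<sigma> c) d
        = game_inner n \<kappa> (permute_game \<sigma> c) (\<lambda>i x. of_int (sign \<sigma>) * permute_game \<sigma> d i x)"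
      by (rule game_inner_cong) (auto simp: skew_symmetric_game_permute[OF assms \<sigma>, symmetric])
    also have "\<dots> = of_int (sign \<sigma>) * game_inner n \<kappa> c d"
      by (simp add: game_inner_scale_right game_inner_permute_game[OF \<sigma>])
    finally show ?thesis
      by (simp add: mult.assoc[symmetric] of_int_mult[symmetric])
  qed
  then show ?thesis
    unfolding skew_symmetrize_def game_inner_scale_left game_inner_sum_left
    using card_permutes_atLeastAtMost[of n] by simp
qed

lemma residual_asymmetric:
  assumes "n \<ge> 2" "c \<in> games n \<kappa>"
  shows "(\<lambda>i x. c i x - symmetrize n c i x - skew_symmetrize n c i x) \<in> asymmetric_games n \<kappa>"
proof -
  have S: "symmetrize n c \<in> symmetric_games n \<kappa>" by (rule symmetrize_symmetric[OF assms(2)])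
  have K: "skew_symmetrize n c \<in> skew_symmetric_games n \<kappa>"
    by (rule skew_symmetrize_skew_symmetric[OF assms(2)])
  have "symmetrize n c \<in> games n \<kappa>" "skew_symmetrize n c \<in> games n \<kappa>"
    using S K symmetric_games_subset skew_symmetric_games_subset by blast+
  then have "(\<lambda>i x. c i x - symmetrize n c i x - skew_symmetrize n c i x) \<in> games n \<kappa>"
    using assms(2) unfolding games_def by simp
  moreover have "game_inner n \<kappa> (symmetrize n c) d = 0" if "d \<in> skew_symmetric_games n \<kappa>" for d
    using game_inner_symmetric_skew_symmetric[OF assms(1) S that] .
  moreover have "game_inner n \<kappa> (skew_symmetrize n c) d = 0" if "d \<in> symmetric_games n \<kappa>" for d
    using game_inner_symmetric_skew_symmetric[OF assms(1) that K] game_inner_commute by metis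
  ultimately show ?thesis
    unfolding asymmetric_games_def
    by (auto simp: game_inner_diff_left game_inner_symmetrize game_inner_skew_symmetrize)
qed

lemma skew_symmetric_game_eq_0:
  assumes "n > \<kappa> + 1" "c \<in> skew_symmetric_games n \<kappa>"
  shows "c i x = 0"
proof (cases "i \<in> {1..n} \<and> x \<in> profiles n \<kappa>")
  case False
  then show ?thesis using assms(2) skew_symmetric_games_subset unfolding games_def by blast
next
  case True
  then have i: "i \<in> {1..n}" and x: "x \<in> profiles n \<kappa>" by auto
  have "x ` ({1..n} - {i}) \<subseteq> {1..\<kappa>}" using x unfolding profiles_def by auto
  moreover have "card ({1..n} - {i}) = n - 1" using i by simp
  ultimately have "\<not> inj_on x ({1..n} - {i})"
    using card_inj_on_le[of x "{1..n} - {i}" "{1..\<kappa>}"] assms(1) by auto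
  then obtain j k where jk: "j \<in> {1..n} - {i}" "k \<in> {1..n} - {i}" "j \<noteq> k" "x j = x k"
    unfolding inj_on_def by blast
  define \<tau> where "\<tau> = Transposition.transpose j k"
  have \<tau>: "\<tau> permutes {1..n}" unfolding \<tau>_def using jk by (intro permutes_swap_id) auto
  have "sign \<tau> = -1" unfolding \<tau>_def using jk by (simp add: sign_swap_id)
  moreover have "\<tau> i = i" unfolding \<tau>_def using jk by auto
  moreover have "x \<circ> inv \<tau> = x"
    unfolding \<tau>_def using jk(4) by (auto simp: Transposition.transpose_def fun_eq_iff)
  ultimately have "c i x = - c i x"
    using skew_symmetric_game_permute[OF assms(2) \<tau> i x] by (simp add: permute_game_def)
  then show ?thesis by simp
qed

lemma games_eq_symmetric_skew_asymmetric:
  assumes "n \<ge> 2"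
  shows "games n \<kappa> = {(\<lambda>i x. a i x + b i x + c i x) | a b c.
    a \<in> symmetric_games n \<kappa> \<and> b \<in> skew_symmetric_games n \<kappa> \<and> c \<in> asymmetric_games n \<kappa>}"
    (is "_ = ?sums")
proof
  show "games n \<kappa> \<subseteq> ?sums"
  proof
    fix c assume c: "c \<in> games n \<kappa>"
    define r where "r = (\<lambda>i x. c i x - symmetrize n c i x - skew_symmetrize n c i x)"
    have "c = (\<lambda>i x. symmetrize n c i x + skew_symmetrize n c i x + r i x)"
      unfolding r_def by simp
    then show "c \<in> ?sums"
      using symmetrize_symmetric[OF c] skew_symmetrize_skew_symmetric[OF c]
        residual_asymmetric[OF assms c, folded r_def] by blast
  qed
  show "?sums \<subseteq> games n \<kappa>"
  proof
    fix f assume "f \<in> ?sums"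
    then obtain a b c where "f = (\<lambda>i x. a i x + b i x + c i x)"
      and "a \<in> games n \<kappa>" "b \<in> games n \<kappa>" "c \<in> games n \<kappa>"
      using symmetric_games_subset skew_symmetric_games_subset asymmetric_games_subset by blast
    then show "f \<in> games n \<kappa>" by (simp add: games_add)
  qed
qed

lemma games_eq_symmetric_asymmetric:
  assumes "n > \<kappa> + 1"
  shows "games n \<kappa> = {(\<lambda>i x. a i x + b i x) | a b.
    a \<in> symmetric_games n \<kappa> \<and> b \<in> asymmetric_games n \<kappa>}"
    (is "_ = ?sums")
proof
  show "games n \<kappa> \<subseteq> ?sums"
  proof
    fix c assume c: "c \<in> games n \<kappa>"
    have "skew_symmetrize n c i x = 0" for i x
      using skew_symmetric_game_eq_0[OF assms skew_symmetrize_skew_symmetric[OF c]] .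
    define r where "r = (\<lambda>i x. c i x - symmetrize n c i x - skew_symmetrize n c i x)"
    have "c = (\<lambda>i x. symmetrize n c i x + r i x)"
      using \<open>\<And>i x. skew_symmetrize n c i x = 0\<close> unfolding r_def by simp
    moreover have "r \<in> asymmetric_games n \<kappa>"
      unfolding r_def by (rule residual_asymmetric) (use assms c in auto)
    ultimately show "c \<in> ?sums"
      using symmetrize_symmetric[OF c] by blast
  qed
  show "?sums \<subseteq> games n \<kappa>"
  proof
    fix f assume "f \<in> ?sums"
    then obtain a b where "f = (\<lambda>i x. a i x + b i x)" "a \<in> games n \<kappa>" "b \<in> games n \<kappa>"
      using symmetric_games_subset asymmetric_games_subset by blast
    then show "f \<in> games n \<kappa>" by (simp add: games_add)
  qed
qed

theorem proposition5p8:
  fixes n \<kappa> :: nat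
  assumes "n \<ge> 2" and "\<kappa> \<ge> 1"
  shows "game_orth n \<kappa> (symmetric_games n \<kappa>) (skew_symmetric_games n \<kappa>)
    \<and> (n > \<kappa> + 1 \<longrightarrow> orth_dsum2 n \<kappa> (symmetric_games n \<kappa>) (asymmetric_games n \<kappa>))
    \<and> (n \<le> \<kappa> + 1 \<longrightarrow> orth_dsum3 n \<kappa> (symmetric_games n \<kappa>) (skew_symmetric_games n \<kappa>)
                                   (asymmetric_games n \<kappa>))"
proof -
  have SK: "game_orth n \<kappa> (symmetric_games n \<kappa>) (skew_symmetric_games n \<kappa>)"
    unfolding game_orth_def using game_inner_symmetric_skew_symmetric[OF assms(1)] by blast
  have SE: "game_orth n \<kappa> (symmetric_games n \<kappa>) (asymmetric_games n \<kappa>)"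
    and KE: "game_orth n \<kappa> (skew_symmetric_games n \<kappa>) (asymmetric_games n \<kappa>)"
    by (auto intro: game_orth_asymmetric_games)
  show ?thesis
  proof (intro conjI impI)
    assume "n > \<kappa> + 1"
    then show "orth_dsum2 n \<kappa> (symmetric_games n \<kappa>) (asymmetric_games n \<kappa>)"
      unfolding orth_dsum2_def using SE games_eq_symmetric_asymmetric by blast
  next
    show "orth_dsum3 n \<kappa> (symmetric_games n \<kappa>) (skew_symmetric_games n \<kappa>) (asymmetric_games n \<kappa>)"
      unfolding orth_dsum3_def using SK SE KE games_eq_symmetric_skew_asymmetric[OF assms(1)] by blast
  qed (rule SK)
qed

end
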